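(* For $g=1$, the subspace $B_{(1)}\subset\mathfrak t_{(1)}(2)^{\times 2}$ is one-dimensional, spanned by $V=([t_{12},x^{(1)}],[t_{12},y^{(1)}])$.
   Context: $\mathbb K$ is a field of characteristic zero. For $n\ge1$, $\mathfrak t_{(1)}(n)$ is the Lie algebra generated by $x^{(i)},y^{(i)},t_{ij}$ ($1\le i,j\le n$) with relations: all $t_{ii}$ central; $t_{ij}=t_{ji}$; $[t_{ij},t_{kl}]=0$ for $i,j,k,l$ distinct; $[t_{ik}+t_{kj},t_{ij}]=0$ for $i,j,k$ distinct; $[x^{(i)},x^{(j)}]=[y^{(i)},y^{(j)}]=0$ for $i\ne j$; $[x^{(i)},y^{(j)}]=t_{ij}$ for $i\neq j$; $[x^{(i)},y^{(i)}]=-\sum_{j\neq i}t_{ij}$. For $v\in\mathfrak t_{(1)}(1)$, $v^{12}\in\mathfrak t_{(1)}(2)$ is the image under the Lie morphism with $x^{(1)}\mapsto x^{(1)}+x^{(2)}$, $y^{(1)}\mapsto y^{(1)}+y^{(2)}$, $t_{11}\mapsto t_{11}+t_{22}+t_{12}$. $B_{(1)}$ is the set of pairs $(V_a,V_b)$ for which there is $v\in\mathfrak t_{(1)}(1)$ with $V_a=[v^{12},x^{(1)}]$, $V_b=[v^{12},y^{(1)}]$. *)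

theory Defs
  imports Main
begin

datatype gen = X nat | Y nat | T nat nat

datatype 'k lt = Gen gen | Zero | Add "'k lt" "'k lt" | Smul 'k "'k lt" | Br "'k lt" "'k lt"

definition lsum :: "'k lt list \<Rightarrow> 'k lt" where
  "lsum xs = foldr Add xs Zero"

text \<open>The congruence presenting t_(1)(n): smallest congruence containing the
  K-Lie algebra axioms and the defining relations (indices in {1..n}).\<close>
inductive lie_eqv :: "nat \<Rightarrow> 'k::field lt \<Rightarrow> 'k lt \<Rightarrow> bool" for n :: nat where
  refl: "lie_eqv n a a"
| sym: "lie_eqv n a b \<Longrightarrow> lie_eqv n b a"
| trans: "lie_eqv n a b \<Longrightarrow> lie_eqv n b c \<Longrightarrow> lie_eqv n a c"
| cong_add: "lie_eqv n a a' \<Longrightarrow> lie_eqv n b b' \<Longrightarrow> lie_eqv n (Add a b) (Add a' b')"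
| cong_smul: "lie_eqv n a a' \<Longrightarrow> lie_eqv n (Smul c a) (Smul c a')"
| cong_br: "lie_eqv n a a' \<Longrightarrow> lie_eqv n b b' \<Longrightarrow> lie_eqv n (Br a b) (Br a' b')"
| add_assoc: "lie_eqv n (Add (Add a b) c) (Add a (Add b c))"
| add_comm: "lie_eqv n (Add a b) (Add b a)"
| add_zero: "lie_eqv n (Add a Zero) a"
| add_neg: "lie_eqv n (Add a (Smul (-1) a)) Zero"
| smul_one: "lie_eqv n (Smul 1 a) a"
| smul_smul: "lie_eqv n (Smul c (Smul d a)) (Smul (c * d) a)"
| smul_add: "lie_eqv n (Smul c (Add a b)) (Add (Smul c a) (Smul c b))"
| add_smul: "lie_eqv n (Smul (c + d) a) (Add (Smul c a) (Smul d a))"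
| br_add_left: "lie_eqv n (Br (Add a b) c) (Add (Br a c) (Br b c))"
| br_add_right: "lie_eqv n (Br a (Add b c)) (Add (Br a b) (Br a c))"
| br_smul_left: "lie_eqv n (Br (Smul c a) b) (Smul c (Br a b))"
| br_smul_right: "lie_eqv n (Br a (Smul c b)) (Smul c (Br a b))"
| br_alt: "lie_eqv n (Br a a) Zero"
| jacobi: "lie_eqv n (Add (Br a (Br b c)) (Add (Br b (Br c a)) (Br c (Br a b)))) Zero"
| t_central: "i \<in> {1..n} \<Longrightarrow> lie_eqv n (Br (Gen (T i i)) a) Zero"
| t_sym: "i \<in> {1..n} \<Longrightarrow> j \<in> {1..n} \<Longrightarrow> lie_eqv n (Gen (T i j)) (Gen (T j i))"
| t_comm: "{i, j, k, l} \<subseteq> {1..n} \<Longrightarrow> distinct [i, j, k, l] \<Longrightarrow>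
     lie_eqv n (Br (Gen (T i j)) (Gen (T k l))) Zero"
| t_4T: "{i, j, k} \<subseteq> {1..n} \<Longrightarrow> distinct [i, j, k] \<Longrightarrow>
     lie_eqv n (Br (Add (Gen (T i k)) (Gen (T k j))) (Gen (T i j))) Zero"
| xx: "i \<in> {1..n} \<Longrightarrow> j \<in> {1..n} \<Longrightarrow> i \<noteq> j \<Longrightarrow>
     lie_eqv n (Br (Gen (X i)) (Gen (X j))) Zero"
| yy: "i \<in> {1..n} \<Longrightarrow> j \<in> {1..n} \<Longrightarrow> i \<noteq> j \<Longrightarrow>
     lie_eqv n (Br (Gen (Y i)) (Gen (Y j))) Zero"
| xy: "i \<in> {1..n} \<Longrightarrow> j \<in> {1..n} \<Longrightarrow> i \<noteq> j \<Longrightarrow>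
     lie_eqv n (Br (Gen (X i)) (Gen (Y j))) (Gen (T i j))"
| xy_diag: "i \<in> {1..n} \<Longrightarrow>
     lie_eqv n (Br (Gen (X i)) (Gen (Y i)))
       (Smul (-1) (lsum (map (\<lambda>j. Gen (T i j)) (filter (\<lambda>j. j \<noteq> i) [1..<n+1]))))"

text \<open>Element of t_(1)(n) represented by a term: its equivalence class.\<close>
definition cls :: "nat \<Rightarrow> 'k::field lt \<Rightarrow> 'k lt set" where
  "cls n t = {s. lie_eqv n s t}"

fun gen_ok :: "nat \<Rightarrow> gen \<Rightarrow> bool" where
  "gen_ok n (X i) = (i \<in> {1..n})"
| "gen_ok n (Y i) = (i \<in> {1..n})"
| "gen_ok n (T i j) = (i \<in> {1..n} \<and> j \<in> {1..n})"

fun wf :: "nat \<Rightarrow> 'k lt \<Rightarrow> bool" where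
  "wf n (Gen g) = gen_ok n g"
| "wf n Zero = True"
| "wf n (Add a b) = (wf n a \<and> wf n b)"
| "wf n (Smul c a) = wf n a"
| "wf n (Br a b) = (wf n a \<and> wf n b)"

text \<open>The map v \<mapsto> v^{12}, on representatives (generators of t_(1)(1)).\<close>
fun phi12 :: "'k lt \<Rightarrow> 'k lt" where
  "phi12 (Gen (X i)) = (if i = 1 then Add (Gen (X 1)) (Gen (X 2)) else Gen (X i))"
| "phi12 (Gen (Y i)) = (if i = 1 then Add (Gen (Y 1)) (Gen (Y 2)) else Gen (Y i))"
| "phi12 (Gen (T i j)) = (if i = 1 \<and> j = 1
      then Add (Add (Gen (T 1 1)) (Gen (T 2 2))) (Gen (T 1 2)) else Gen (T i j))"
| "phi12 Zero = Zero"
| "phi12 (Add a b) = Add (phi12 a) (phi12 b)"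
| "phi12 (Smul c a) = Smul c (phi12 a)"
| "phi12 (Br a b) = Br (phi12 a) (phi12 b)"

definition B1 :: "('k::field lt set \<times> 'k lt set) set" where
  "B1 = {(cls 2 (Br (phi12 v) (Gen (X 1))), cls 2 (Br (phi12 v) (Gen (Y 1)))) | v. wf 1 v}"

end

theory Submission
  imports Defs "HOL.Vector_Spaces" "HOL-Library.Product_Plus"
begin

text \<open>The map \<open>v \<mapsto> v\<^sup>1\<^sup>2\<close> sends the generators \<open>x, y, t\<^sub>1\<^sub>1\<close> of \<open>t\<^sub>(\<^sub>1\<^sub>)(1)\<close> to
  \<open>x\<^sub>1 + x\<^sub>2\<close>, \<open>y\<^sub>1 + y\<^sub>2\<close> and \<open>t\<^sub>1\<^sub>1 + t\<^sub>2\<^sub>2 + t\<^sub>1\<^sub>2\<close>. These commute pairwise in \<open>t\<^sub>(\<^sub>1\<^sub>)(2)\<close>: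
  \<open>t\<^sub>1\<^sub>2 = [x\<^sub>1, y\<^sub>2]\<close> commutes with \<open>x\<^sub>1 + x\<^sub>2\<close> and \<open>y\<^sub>1 + y\<^sub>2\<close> because \<open>x\<^sub>1\<close> and \<open>y\<^sub>2\<close> do.
  Hence the image of \<open>t\<^sub>(\<^sub>1\<^sub>)(1)\<close> is just their linear span. Bracketing with \<open>x\<^sub>1\<close> and
  \<open>y\<^sub>1\<close> kills the first two and sends the third to \<open>[t\<^sub>1\<^sub>2, x\<^sub>1]\<close> and \<open>[t\<^sub>1\<^sub>2, y\<^sub>1]\<close>, so
  \<open>B\<^sub>(\<^sub>1\<^sub>)\<close> is the line through \<open>V\<close>. That \<open>V \<noteq> 0\<close> is seen in a representation of
  \<open>t\<^sub>(\<^sub>1\<^sub>)(2)\<close> on the two-dimensional non-abelian Lie algebra \<open>[a, b] = b\<close>, with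
  \<open>x\<^sub>i \<mapsto> \<plusminus>a\<close>, \<open>y\<^sub>i \<mapsto> \<plusminus>b\<close>, \<open>t\<^sub>1\<^sub>2 \<mapsto> -b\<close>, where \<open>[t\<^sub>1\<^sub>2, x\<^sub>1] \<mapsto> b\<close>; this works over any
  field.\<close>

declare One_nat_def [simp del]

locale lie_algebra = vector_space scale
  for scale :: "'k::field \<Rightarrow> 'a::ab_group_add \<Rightarrow> 'a" (infixr \<open>*s\<close> 75) +
  fixes bracket :: "'a \<Rightarrow> 'a \<Rightarrow> 'a"
  assumes bracket_add_left: "bracket (a + b) c = bracket a c + bracket b c"
    and bracket_add_right: "bracket a (b + c) = bracket a b + bracket a c"
    and bracket_scale_left: "bracket (r *s a) b = r *s bracket a b"
    and bracket_scale_right: "bracket a (r *s b) = r *s bracket a b"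
    and bracket_self [simp]: "bracket a a = 0"
    and jacobi_identity: "bracket a (bracket b c) + (bracket b (bracket c a) + bracket c (bracket a b)) = 0"
begin

lemma bracket_zero_left [simp]: "bracket 0 a = 0"
  using bracket_scale_left[of 0] by simp

lemma bracket_zero_right [simp]: "bracket a 0 = 0"
  using bracket_scale_right[of _ 0] by simp

lemma bracket_minus_left: "bracket (- a) b = - bracket a b"
  using bracket_scale_left[of "-1"] by simp

lemma bracket_minus_right: "bracket a (- b) = - bracket a b"
  using bracket_scale_right[of _ "-1"] by simp

lemmas bracket_distribs = bracket_add_left bracket_add_right bracket_scale_left
  bracket_scale_right bracket_minus_left bracket_minus_right

lemma bracket_antisym: "bracket a b = - bracket b a"
proof -
  have "bracket a b + bracket b a = bracket (a + b) (a + b)"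
    by (simp only: bracket_add_left bracket_add_right) simp
  also have "\<dots> = 0"
    by simp
  finally show ?thesis
    by (simp add: eq_neg_iff_add_eq_0)
qed

lemma bracket_swap: "bracket a b = c \<Longrightarrow> bracket b a = - c"
  by (simp add: bracket_antisym[of b a])

lemma bracket_bracket_left: "bracket (bracket a b) c = bracket a (bracket b c) - bracket b (bracket a c)"
  using jacobi_identity[of a b c] bracket_antisym[of c "bracket a b"] bracket_antisym[of c a]
  by (simp add: bracket_minus_right algebra_simps eq_neg_iff_add_eq_0)

lemma bracket_span_of_commuting:
  assumes "\<And>x y. x \<in> S \<Longrightarrow> y \<in> S \<Longrightarrow> bracket x y = 0"
    and "a \<in> span S" and "b \<in> span S"
  shows "bracket a b = 0"
  using assms(2)
proof (induction a rule: span_induct_alt)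
  case (step c x a)
  have "bracket x b = 0"
    using assms(3) by (induction b rule: span_induct_alt)
      (simp_all add: assms(1) step.hyps(1) bracket_add_right bracket_scale_right)
  then show ?case by (simp add: step.IH bracket_add_left bracket_scale_left)
qed simp

primrec eval :: "(gen \<Rightarrow> 'a) \<Rightarrow> 'k lt \<Rightarrow> 'a" where
  "eval g (Gen x) = g x"
| "eval g Zero = 0"
| "eval g (Add a b) = eval g a + eval g b"
| "eval g (Smul c a) = c *s eval g a"
| "eval g (Br a b) = bracket (eval g a) (eval g b)"

definition satisfies_relations :: "nat \<Rightarrow> (gen \<Rightarrow> 'a) \<Rightarrow> bool" where
  "satisfies_relations n g \<longleftrightarrow>
     (\<forall>i\<in>{1..n}. \<forall>a. bracket (g (T i i)) a = 0)
   \<and> (\<forall>i\<in>{1..n}. \<forall>j\<in>{1..n}. g (T i j) = g (T j i))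
   \<and> (\<forall>i j k l. {i, j, k, l} \<subseteq> {1..n} \<longrightarrow> distinct [i, j, k, l] \<longrightarrow>
        bracket (g (T i j)) (g (T k l)) = 0)
   \<and> (\<forall>i j k. {i, j, k} \<subseteq> {1..n} \<longrightarrow> distinct [i, j, k] \<longrightarrow>
        bracket (g (T i k) + g (T k j)) (g (T i j)) = 0)
   \<and> (\<forall>i\<in>{1..n}. \<forall>j\<in>{1..n}. i \<noteq> j \<longrightarrow>
        bracket (g (X i)) (g (X j)) = 0 \<and> bracket (g (Y i)) (g (Y j)) = 0
      \<and> bracket (g (X i)) (g (Y j)) = g (T i j))
   \<and> (\<forall>i\<in>{1..n}. bracket (g (X i)) (g (Y i)) =
        - sum_list (map (\<lambda>j. g (T i j)) (filter (\<lambda>j. j \<noteq> i) [1..<n+1])))"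

lemma eval_lsum: "eval g (lsum ts) = sum_list (map (eval g) ts)"
  by (induction ts) (simp_all add: lsum_def)

lemma eval_respects_lie_eqv:
  assumes "lie_eqv n a b" and "satisfies_relations n g"
  shows "eval g a = eval g b"
proof -
  note relations = assms(2)[unfolded satisfies_relations_def]
  from assms(1) show ?thesis
  proof (induction rule: lie_eqv.induct)
    case (jacobi a b c)
    then show ?case by (simp add: jacobi_identity)
  next
    case (t_4T i j k)
    then show ?case using relations by (simp only: eval.simps)
  next
    case (xy_diag i)
    then show ?case using relations by (simp add: eval_lsum o_def)
  qed (use relations in \<open>simp_all add: algebra_simps bracket_distribs\<close>)
qed

end

lemma lie_eqv_equivp: "equivp (lie_eqv n)"
  by (intro equivpI reflpI sympI transpI) (auto intro: lie_eqv.intros)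

lemma cls_eq_iff_lie_eqv: "cls n a = cls n b \<longleftrightarrow> lie_eqv n a b"
  unfolding cls_def by (auto intro: lie_eqv.intros)

quotient_type (overloaded) 'k t2 = "'k::field lt" / "lie_eqv 2"
  morphisms rep_t2 abs_t2
  by (rule lie_eqv_equivp)

instantiation t2 :: (field) ab_group_add
begin

lift_definition zero_t2 :: "'a t2" is Zero .

lift_definition plus_t2 :: "'a t2 \<Rightarrow> 'a t2 \<Rightarrow> 'a t2" is Add
  by (rule lie_eqv.cong_add)

lift_definition uminus_t2 :: "'a t2 \<Rightarrow> 'a t2" is "Smul (-1)"
  by (rule lie_eqv.cong_smul)

lift_definition minus_t2 :: "'a t2 \<Rightarrow> 'a t2 \<Rightarrow> 'a t2" is "\<lambda>a b. Add a (Smul (-1) b)"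
  by (intro lie_eqv.cong_add lie_eqv.cong_smul)

instance proof
  fix a b c :: "'a t2"
  show "a + b + c = a + (b + c)" by transfer (rule lie_eqv.add_assoc)
  show "a + b = b + a" by transfer (rule lie_eqv.add_comm)
  show "0 + a = a" by transfer (meson lie_eqv.add_comm lie_eqv.add_zero lie_eqv.trans)
  show "- a + a = 0" by transfer (meson lie_eqv.add_comm lie_eqv.add_neg lie_eqv.trans)
  show "a - b = a + - b" by transfer (rule lie_eqv.refl)
qed

end

lift_definition scale_t2 :: "'k::field \<Rightarrow> 'k t2 \<Rightarrow> 'k t2" is Smul
  by (rule lie_eqv.cong_smul)

lift_definition bracket_t2 :: "'k::field t2 \<Rightarrow> 'k t2 \<Rightarrow> 'k t2" is Br
  by (rule lie_eqv.cong_br)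

lift_definition gen_t2 :: "gen \<Rightarrow> 'k::field t2" is Gen .

interpretation t2: lie_algebra scale_t2 bracket_t2
proof unfold_locales
  fix a b c :: "'k::field t2" and r s :: 'k
  show "scale_t2 r (a + b) = scale_t2 r a + scale_t2 r b" by transfer (rule lie_eqv.smul_add)
  show "scale_t2 (r + s) a = scale_t2 r a + scale_t2 s a" by transfer (rule lie_eqv.add_smul)
  show "scale_t2 r (scale_t2 s a) = scale_t2 (r * s) a" by transfer (rule lie_eqv.smul_smul)
  show "scale_t2 1 a = a" by transfer (rule lie_eqv.smul_one)
  show "bracket_t2 (a + b) c = bracket_t2 a c + bracket_t2 b c" by transfer (rule lie_eqv.br_add_left)
  show "bracket_t2 a (b + c) = bracket_t2 a b + bracket_t2 a c" by transfer (rule lie_eqv.br_add_right)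
  show "bracket_t2 (scale_t2 r a) b = scale_t2 r (bracket_t2 a b)" by transfer (rule lie_eqv.br_smul_left)
  show "bracket_t2 a (scale_t2 r b) = scale_t2 r (bracket_t2 a b)" by transfer (rule lie_eqv.br_smul_right)
  show "bracket_t2 a a = 0" by transfer (rule lie_eqv.br_alt)
  show "bracket_t2 a (bracket_t2 b c) + (bracket_t2 b (bracket_t2 c a) + bracket_t2 c (bracket_t2 a b)) = 0"
    by transfer (rule lie_eqv.jacobi)
qed

lemma abs_t2_eq_eval: "abs_t2 a = t2.eval gen_t2 a"
  by (induction a)
    (simp_all add: gen_t2.abs_eq zero_t2.abs_eq plus_t2.abs_eq[symmetric] scale_t2.abs_eq[symmetric]
      bracket_t2.abs_eq[symmetric])

lemma cls_eq_iff_abs_t2_eq: "cls 2 a = cls 2 b \<longleftrightarrow> abs_t2 a = abs_t2 b"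
  by (simp add: cls_eq_iff_lie_eqv t2.abs_eq_iff)

lemma lsum_off_diagonal_T:
  "lsum (map (\<lambda>j. Gen (T 1 j)) (filter (\<lambda>j. j \<noteq> 1) [1..<2+1])) = Add (Gen (T 1 2)) Zero"
  "lsum (map (\<lambda>j. Gen (T 2 j)) (filter (\<lambda>j. j \<noteq> 2) [1..<2+1])) = Add (Gen (T 2 1)) Zero"
  by (simp_all add: lsum_def upt_rec)

lemma t2_T11_T22_central:
  "bracket_t2 (gen_t2 (T 1 1)) a = 0" "bracket_t2 (gen_t2 (T 2 2)) a = 0"
  by (transfer, rule lie_eqv.t_central, simp)+

lemma t2_T_sym: "gen_t2 (T 2 1) = gen_t2 (T 1 2)"
  by transfer (rule lie_eqv.t_sym, auto)

lemma t2_gen_brackets: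
  "bracket_t2 (gen_t2 (X 1)) (gen_t2 (X 2)) = 0"
  "bracket_t2 (gen_t2 (Y 1)) (gen_t2 (Y 2)) = 0"
  "bracket_t2 (gen_t2 (X 1)) (gen_t2 (Y 2)) = gen_t2 (T 1 2)"
  "bracket_t2 (gen_t2 (X 2)) (gen_t2 (Y 1)) = gen_t2 (T 1 2)"
  "bracket_t2 (gen_t2 (X 1)) (gen_t2 (Y 1)) = - gen_t2 (T 1 2)"
  "bracket_t2 (gen_t2 (X 2)) (gen_t2 (Y 2)) = - gen_t2 (T 1 2)"
proof -
  show "bracket_t2 (gen_t2 (X 1)) (gen_t2 (X 2)) = 0" by transfer (rule lie_eqv.xx, auto)
  show "bracket_t2 (gen_t2 (Y 1)) (gen_t2 (Y 2)) = 0" by transfer (rule lie_eqv.yy, auto)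
  show "bracket_t2 (gen_t2 (X 1)) (gen_t2 (Y 2)) = gen_t2 (T 1 2)" by transfer (rule lie_eqv.xy, auto)
  have "bracket_t2 (gen_t2 (X 2)) (gen_t2 (Y 1)) = gen_t2 (T 2 1)" by transfer (rule lie_eqv.xy, auto)
  then show "bracket_t2 (gen_t2 (X 2)) (gen_t2 (Y 1)) = gen_t2 (T 1 2)" by (simp only: t2_T_sym)
  have "bracket_t2 (gen_t2 (X 1)) (gen_t2 (Y 1)) = scale_t2 (-1) (gen_t2 (T 1 2) + 0)"
    by transfer (rule lie_eqv.xy_diag[where n=2 and i=1, unfolded lsum_off_diagonal_T], simp)
  then show "bracket_t2 (gen_t2 (X 1)) (gen_t2 (Y 1)) = - gen_t2 (T 1 2)" by simp
  have "bracket_t2 (gen_t2 (X 2)) (gen_t2 (Y 2)) = scale_t2 (-1) (gen_t2 (T 2 1) + 0)"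
    by transfer (rule lie_eqv.xy_diag[where n=2 and i=2, unfolded lsum_off_diagonal_T], simp)
  then show "bracket_t2 (gen_t2 (X 2)) (gen_t2 (Y 2)) = - gen_t2 (T 1 2)" unfolding t2_T_sym by simp
qed

lemma t2_gen_brackets_swapped:
  "bracket_t2 (gen_t2 (X 2)) (gen_t2 (X 1)) = 0"
  "bracket_t2 (gen_t2 (Y 2)) (gen_t2 (Y 1)) = 0"
  "bracket_t2 (gen_t2 (Y 2)) (gen_t2 (X 1)) = - gen_t2 (T 1 2)"
  "bracket_t2 (gen_t2 (Y 1)) (gen_t2 (X 2)) = - gen_t2 (T 1 2)"
  "bracket_t2 (gen_t2 (Y 1)) (gen_t2 (X 1)) = gen_t2 (T 1 2)"
  "bracket_t2 (gen_t2 (Y 2)) (gen_t2 (X 2)) = gen_t2 (T 1 2)"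
  using t2_gen_brackets[THEN t2.bracket_swap] by simp_all

lemmas t2_bracket_table = t2_gen_brackets t2_gen_brackets_swapped t2_T11_T22_central

definition diag_x :: "'k::field t2" where
  "diag_x = gen_t2 (X 1) + gen_t2 (X 2)"

definition diag_y :: "'k::field t2" where
  "diag_y = gen_t2 (Y 1) + gen_t2 (Y 2)"

definition diag_t :: "'k::field t2" where
  "diag_t = gen_t2 (T 1 1) + gen_t2 (T 2 2) + gen_t2 (T 1 2)"

lemma x1_y2_bracket_diag:
  "bracket_t2 (gen_t2 (X 1)) diag_x = 0" "bracket_t2 (gen_t2 (X 1)) diag_y = 0"
  "bracket_t2 (gen_t2 (Y 2)) diag_x = 0" "bracket_t2 (gen_t2 (Y 2)) diag_y = 0"
  by (simp_all add: diag_x_def diag_y_def t2.bracket_distribs t2_bracket_table)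

lemma t12_bracket_diag:
  assumes "d \<in> {diag_x, diag_y}"
  shows "bracket_t2 (gen_t2 (T 1 2)) d = 0"
proof -
  have "bracket_t2 (gen_t2 (T 1 2)) d = bracket_t2 (bracket_t2 (gen_t2 (X 1)) (gen_t2 (Y 2))) d"
    by (simp add: t2_gen_brackets)
  also have "\<dots> = bracket_t2 (gen_t2 (X 1)) (bracket_t2 (gen_t2 (Y 2)) d)
                   - bracket_t2 (gen_t2 (Y 2)) (bracket_t2 (gen_t2 (X 1)) d)"
    by (rule t2.bracket_bracket_left)
  also have "\<dots> = 0"
    using assms by (auto simp: x1_y2_bracket_diag)
  finally show ?thesis .
qed

lemma diag_pairwise_commute:
  assumes "a \<in> {diag_x, diag_y, diag_t}" and "b \<in> {diag_x, diag_y, diag_t}"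
  shows "bracket_t2 a b = 0"
proof -
  have xy: "bracket_t2 diag_x diag_y = 0"
    by (simp add: diag_x_def diag_y_def t2.bracket_distribs t2_bracket_table)
  have tx_ty: "bracket_t2 diag_t diag_x = 0" "bracket_t2 diag_t diag_y = 0"
    by (simp_all add: diag_t_def t2.bracket_distribs t2_bracket_table t12_bracket_diag)
  show ?thesis
    using assms xy tx_ty xy[THEN t2.bracket_swap] tx_ty[THEN t2.bracket_swap] by auto
qed

lemma diag_bracket_x1_y1:
  "bracket_t2 diag_x (gen_t2 (X 1)) = 0" "bracket_t2 diag_x (gen_t2 (Y 1)) = 0"
  "bracket_t2 diag_y (gen_t2 (X 1)) = 0" "bracket_t2 diag_y (gen_t2 (Y 1)) = 0"
  "bracket_t2 diag_t (gen_t2 (X 1)) = bracket_t2 (gen_t2 (T 1 2)) (gen_t2 (X 1))"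
  "bracket_t2 diag_t (gen_t2 (Y 1)) = bracket_t2 (gen_t2 (T 1 2)) (gen_t2 (Y 1))"
  by (simp_all add: diag_x_def diag_y_def diag_t_def t2.bracket_distribs t2_bracket_table)

lemma span_diag_bracket_x1_y1:
  assumes "a \<in> t2.span {diag_x, diag_y, diag_t}"
  shows "\<exists>c. bracket_t2 a (gen_t2 (X 1)) = scale_t2 c (bracket_t2 (gen_t2 (T 1 2)) (gen_t2 (X 1)))
           \<and> bracket_t2 a (gen_t2 (Y 1)) = scale_t2 c (bracket_t2 (gen_t2 (T 1 2)) (gen_t2 (Y 1)))"
  using assms
proof (induction a rule: t2.span_induct_alt)
  case base
  show ?case by (rule exI[of _ 0]) simp
next
  case (step r e a)
  then obtain c where c:
    "bracket_t2 a (gen_t2 (X 1)) = scale_t2 c (bracket_t2 (gen_t2 (T 1 2)) (gen_t2 (X 1)))"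
    "bracket_t2 a (gen_t2 (Y 1)) = scale_t2 c (bracket_t2 (gen_t2 (T 1 2)) (gen_t2 (Y 1)))"
    by blast
  show ?case
  proof (cases "e = diag_t")
    case True
    with c show ?thesis
      by (intro exI[of _ "r + c"]) (simp add: t2.bracket_distribs diag_bracket_x1_y1 t2.scale_left_distrib)
  next
    case False
    with step.hyps(1) have "e \<in> {diag_x, diag_y}" by blast
    with c show ?thesis
      by (intro exI[of _ c]) (auto simp: t2.bracket_distribs diag_bracket_x1_y1)
  qed
qed

lemma phi12_in_span_diag:
  assumes "wf 1 v"
  shows "abs_t2 (phi12 v) \<in> t2.span {diag_x, diag_y, diag_t}"
  using assms
proof (induction v)
  case (Gen g)
  then have "abs_t2 (phi12 (Gen g)) \<in> {diag_x, diag_y, diag_t}"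
    by (cases g) (auto simp: abs_t2_eq_eval diag_x_def diag_y_def diag_t_def)
  then show ?case by (rule t2.span_base)
next
  case (Br v w)
  then have "bracket_t2 (abs_t2 (phi12 v)) (abs_t2 (phi12 w)) = 0"
    by (intro t2.bracket_span_of_commuting[OF diag_pairwise_commute]) auto
  then show ?case
    by (simp add: abs_t2_eq_eval t2.span_zero)
qed (simp_all add: abs_t2_eq_eval t2.span_zero t2.span_add t2.span_scale)

lemma phi12_bracket_x1_y1:
  assumes "wf 1 v"
  obtains c where "cls 2 (Br (phi12 v) (Gen (X 1))) = cls 2 (Smul c (Br (Gen (T 1 2)) (Gen (X 1))))"
    and "cls 2 (Br (phi12 v) (Gen (Y 1))) = cls 2 (Smul c (Br (Gen (T 1 2)) (Gen (Y 1))))"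
  using span_diag_bracket_x1_y1[OF phi12_in_span_diag[OF assms]]
  by (auto simp: cls_eq_iff_abs_t2_eq abs_t2_eq_eval)

lemma phi12_T11_bracket_x1_y1:
  fixes c :: "'k::field"
  shows "cls 2 (Br (phi12 (Smul c (Gen (T 1 1)))) (Gen (X 1)))
      = cls 2 (Smul c (Br (Gen (T 1 2)) (Gen (X 1))))"
    and "cls 2 (Br (phi12 (Smul c (Gen (T 1 1)))) (Gen (Y 1)))
      = cls 2 (Smul c (Br (Gen (T 1 2)) (Gen (Y 1))))"
  by (simp_all add: cls_eq_iff_abs_t2_eq abs_t2_eq_eval t2.bracket_distribs t2_T11_T22_central)

text \<open>\<open>(p, q)\<close> stands for \<open>p a + q b\<close> in the Lie algebra with basis \<open>a, b\<close> and \<open>[a, b] = b\<close>.\<close>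

definition aff1_scale :: "'k::field \<Rightarrow> 'k \<times> 'k \<Rightarrow> 'k \<times> 'k" where
  "aff1_scale c x = (c * fst x, c * snd x)"

definition aff1_bracket :: "'k::field \<times> 'k \<Rightarrow> 'k \<times> 'k \<Rightarrow> 'k \<times> 'k" where
  "aff1_bracket x y = (0, fst x * snd y - fst y * snd x)"

interpretation aff1: lie_algebra aff1_scale aff1_bracket
  by unfold_locales (simp_all add: aff1_scale_def aff1_bracket_def prod_eq_iff algebra_simps)

definition aff1_gen :: "gen \<Rightarrow> 'k::field \<times> 'k" where
  "aff1_gen g = (case g of
      X i \<Rightarrow> (if i = 1 then 1 else -1, 0)
    | Y i \<Rightarrow> (0, if i = 1 then 1 else -1)
    | T i j \<Rightarrow> (if i = j then 0 else (0, -1)))"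

lemma aff1_satisfies_relations: "aff1.satisfies_relations 2 aff1_gen"
  unfolding aff1.satisfies_relations_def
  by (auto simp: aff1_gen_def aff1_bracket_def zero_prod_def upt_rec)

lemma cls_t12_x1_neq_Zero: "cls 2 (Br (Gen (T 1 2)) (Gen (X 1))) \<noteq> cls 2 (Zero :: 'k::field lt)"
proof
  assume "cls 2 (Br (Gen (T 1 2)) (Gen (X 1))) = cls 2 (Zero :: 'k lt)"
  then have "lie_eqv 2 (Br (Gen (T 1 2)) (Gen (X 1))) (Zero :: 'k lt)"
    by (simp add: cls_eq_iff_lie_eqv)
  then have "aff1.eval aff1_gen (Br (Gen (T 1 2)) (Gen (X 1))) = aff1.eval aff1_gen (Zero :: 'k lt)"
    using aff1_satisfies_relations by (rule aff1.eval_respects_lie_eqv)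
  then show False
    by (simp add: aff1_gen_def aff1_bracket_def zero_prod_def)
qed

theorem lemma11p7:
  defines "Va \<equiv> Br (Gen (T 1 2)) (Gen (X 1)) :: 'k::field_char_0 lt"
      and "Vb \<equiv> Br (Gen (T 1 2)) (Gen (Y 1)) :: 'k lt"
  shows "(B1 :: ('k lt set \<times> 'k lt set) set) = {(cls 2 (Smul c Va), cls 2 (Smul c Vb)) | c. True}
         \<and> (cls 2 Va, cls 2 Vb) \<noteq> (cls 2 Zero, cls 2 Zero)"
proof
  show "(B1 :: ('k lt set \<times> 'k lt set) set) = {(cls 2 (Smul c Va), cls 2 (Smul c Vb)) | c. True}"
  proof (intro set_eqI iffI)
    fix p :: "'k lt set \<times> 'k lt set"
    assume "p \<in> B1"
    then obtain v :: "'k lt" where "wf 1 v"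
      and p: "p = (cls 2 (Br (phi12 v) (Gen (X 1))), cls 2 (Br (phi12 v) (Gen (Y 1))))"
      unfolding B1_def by blast
    then obtain c where "p = (cls 2 (Smul c Va), cls 2 (Smul c Vb))"
      unfolding Va_def Vb_def by (elim phi12_bracket_x1_y1) simp
    then show "p \<in> {(cls 2 (Smul c Va), cls 2 (Smul c Vb)) | c. True}"
      by blast
  next
    fix p :: "'k lt set \<times> 'k lt set"
    assume "p \<in> {(cls 2 (Smul c Va), cls 2 (Smul c Vb)) | c. True}"
    then obtain c where "p = (cls 2 (Smul c Va), cls 2 (Smul c Vb))"
      by blast
    then have "p = (cls 2 (Br (phi12 (Smul c (Gen (T 1 1)))) (Gen (X 1))),
                    cls 2 (Br (phi12 (Smul c (Gen (T 1 1)))) (Gen (Y 1))))"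
      unfolding Va_def Vb_def by (simp only: phi12_T11_bracket_x1_y1)
    then show "p \<in> B1"
      unfolding B1_def by fastforce
  qed
  show "(cls 2 Va, cls 2 Vb) \<noteq> (cls 2 Zero, cls 2 Zero)"
    by (simp add: Va_def cls_t12_x1_neq_Zero)
qed

end
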